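(* Let $n\ge 1$, let $\mathbf S=\{(\mathbf q_1,v_1),\ldots,(\mathbf q_m,v_m)\}$ be a finite multiset of queries and let $\mathbf Q=(\mathbf q,v)$ be a query, where $\mathbf q,\mathbf q_j\in\mathbb R^n$ and $v,v_j\in[0,\infty)$. The following are equivalent: (1) $\mathbf Q$ is linearly answerable from $\mathbf S$; (2) $\mathbf S\rightarrow\mathbf Q$; (3) there exist $c_1,\ldots,c_m\in\mathbb R$ such that $c_1\mathbf q_1+\cdots+c_m\mathbf q_m=\mathbf q$ and $c_1^2v_1+\cdots+c_m^2v_m\le v$.
   Context: A database is a vector $\mathbf x\in\mathbb R^n$. A linear query is a vector $\mathbf q\in\mathbb R^n$, with exact answer $\mathbf q(\mathbf x)=\mathbf q\cdot\mathbf x=\sum_i q_ix_i$. A query is a pair $\mathbf Q=(\mathbf q,v)$ with $\mathbf q$ a linear query and $v\ge 0$ a variance bound. A mechanism $\mathcal K$ assigns to each database $\mathbf x$ a real random variable $\mathcal K(\mathbf x)$; it answers $\mathbf Q=(\mathbf q,v)$ if for every database $\mathbf x$, $\mathbb E[\mathcal K(\mathbf x)]=\mathbf q(\mathbf x)$ and $\mathrm{Var}[\mathcal K(\mathbf x)]\le v$. Distinct queries are answered with independent randomness. $\mathbf Q$ is answerable from the multiset $\{\mathbf Q_1,\ldots,\mathbf Q_k\}$ if there is a function $f:\mathbb R^k\to\mathbb R$ such that for all mechanisms $\mathcal K_1,\ldots,\mathcal K_k$ answering $\mathbf Q_1,\ldots,\mathbf Q_k$ respectively (with $\mathcal K_1(\mathbf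 x),\ldots,\mathcal K_k(\mathbf x)$ mutually independent), the mechanism $\mathbf x\mapsto f(\mathcal K_1(\mathbf x),\ldots,\mathcal K_k(\mathbf x))$ answers $\mathbf Q$; it is linearly answerable if such an $f$ can be chosen linear. The determinacy relation $\mathbf S\rightarrow\mathbf Q$ between finite multisets of queries and queries is the smallest relation satisfying: (Summation) for every $k\ge 0$, $\{(\mathbf q_1,v_1),\ldots,(\mathbf q_k,v_k)\}\rightarrow(\mathbf q_1+\cdots+\mathbf q_k,\,v_1+\cdots+v_k)$; (Scalar multiplication) for every $c\in\mathbb R$, $\{(\mathbf q,v)\}\rightarrow(c\mathbf q,c^2v)$; (Relaxation) $\{(\mathbf q,v)\}\rightarrow(\mathbf q,v')$ whenever $v\le v'$; (Transitivity) if $\mathbf S_1\rightarrow\mathbf Q_1,\ldots,\mathbf S_k\rightarrow\mathbf Q_k$ and $\{\mathbf Q_1,\ldots,\mathbf Q_k\}\rightarrow\mathbf Q$, then the multiset union $\mathbf S_1\uplus\cdots\uplus\mathbf S_k\rightarrow\mathbf Q$. *)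

theory Defs
  imports "HOL-Probability.Probability" "HOL-Library.Multiset"
begin

type_synonym ('n) query = "(real ^ 'n) \<times> real"

text \<open>A mechanism is represented by the distribution of its output:
  to each database x it assigns a probability distribution on the reals (a Borel
  probability measure).  Independence of several mechanisms is modelled by taking
  the product measure of their output distributions.\<close>

definition answers :: "(real ^ 'n \<Rightarrow> real measure) \<Rightarrow> ('n::finite) query \<Rightarrow> bool" where
  "answers K Q \<longleftrightarrow> (\<forall>x. prob_space (K x) \<and> sets (K x) = sets borel \<and>
      integrable (K x) (\<lambda>t. t) \<and> integrable (K x) (\<lambda>t. t ^ 2) \<and>
      (\<integral>t. t \<partial>K x) = fst Q \<bullet> x \<and>
      (\<integral>t. (t - fst Q \<bullet> x) ^ 2 \<partial>K x) \<le> snd Q)"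

definition lin_answerable :: "('n::finite) query list \<Rightarrow> ('n::finite) query \<Rightarrow> bool" where
  "lin_answerable S Q \<longleftrightarrow> (\<exists>c :: nat \<Rightarrow> real.
     \<forall>K :: nat \<Rightarrow> real ^ 'n \<Rightarrow> real measure.
       (\<forall>i < length S. answers (K i) (S ! i)) \<longrightarrow>
       answers (\<lambda>x. distr (PiM {..<length S} (\<lambda>i. K i x)) borel
                          (\<lambda>\<omega>. \<Sum>i<length S. c i * \<omega> i)) Q)"

inductive determ :: "('n::finite) query multiset \<Rightarrow> ('n::finite) query \<Rightarrow> bool" where
  summation: "(\<forall>p \<in> set qs. snd p \<ge> 0) \<Longrightarrow>
     determ (mset qs) (sum_list (map fst qs), sum_list (map snd qs))"
| scalar: "v \<ge> 0 \<Longrightarrow> determ {#(q, v)#} (c *\<^sub>R q, c ^ 2 * v)"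
| relax: "0 \<le> v \<Longrightarrow> v \<le> v' \<Longrightarrow> determ {#(q, v)#} (q, v')"
| trans: "length Ss = length Qs \<Longrightarrow> (\<forall>i < length Ss. determ (Ss ! i) (Qs ! i)) \<Longrightarrow>
     determ (mset Qs) Q \<Longrightarrow> determ (sum_list Ss) Q"

end

theory Submission
  imports Defs
begin

text \<open>
  Both (1) and (2) are equivalent to (3).

  Determinacy: say Q = (q, v) is a linear combination of a multiset M of queries if
  \<open>q = \<Sum> c\<^sub>j q\<^sub>j\<close> over the queries \<open>(q\<^sub>j, v\<^sub>j)\<close> of M with \<open>\<Sum> c\<^sub>j\<^sup>2 v\<^sub>j \<le> v\<close>.
  Each rule of \<open>determ\<close> preserves this property, the transitivity rule by substituting
  the combinations of the premises into the combination of the conclusion. Conversely, such a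
  combination is derived by scaling every query, summing, and relaxing the variance.

  Linear answerability: for independent mechanisms, \<open>\<Sum> c\<^sub>j K\<^sub>j\<close> has mean \<open>\<Sum> c\<^sub>j q\<^sub>j \<bullet> x\<close>
  and variance \<open>\<Sum> c\<^sub>j\<^sup>2 Var K\<^sub>j\<close>, which gives (3) \<Longrightarrow> (1). For (1) \<Longrightarrow> (3), run the linear
  map on the two-point mechanisms \<open>q\<^sub>j \<bullet> x \<plusminus> \<surd>v\<^sub>j\<close>, whose variances attain the bounds:
  the mean identity for all x forces \<open>\<Sum> c\<^sub>j q\<^sub>j = q\<close>, the variance bound gives
  \<open>\<Sum> c\<^sub>j\<^sup>2 v\<^sub>j \<le> v\<close>.
\<close>

text \<open>Pairing each query of M with its coefficient in a list L avoids fixing an enumeration of M.\<close>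

definition lin_combination :: "('n::finite) query multiset \<Rightarrow> 'n query \<Rightarrow> bool" where
  "lin_combination M Q \<longleftrightarrow> (\<exists>L. mset (map fst L) = M
     \<and> (\<Sum>(p, a)\<leftarrow>L. a *\<^sub>R fst p) = fst Q \<and> (\<Sum>(p, a)\<leftarrow>L. a\<^sup>2 * snd p) \<le> snd Q)"

lemma sum_list_map_mset_eq:
  fixes f :: "'a \<Rightarrow> 'b::comm_monoid_add"
  assumes "mset xs = mset ys"
  shows "(\<Sum>x\<leftarrow>xs. f x) = (\<Sum>y\<leftarrow>ys. f y)"
proof -
  have "(\<Sum>x\<leftarrow>xs. f x) = sum_mset (image_mset f (mset xs))"
    by (simp flip: sum_mset_sum_list)
  also have "\<dots> = (\<Sum>y\<leftarrow>ys. f y)"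
    by (simp add: assms flip: sum_mset_sum_list)
  finally show ?thesis .
qed

lemma sum_list_map_upt: "(\<Sum>j\<leftarrow>[0..<n]. f j) = (\<Sum>j<n. f j)"
  by (induction n) auto

lemma sum_list_zip_nth:
  "length cs = length S \<Longrightarrow> (\<Sum>(p, a)\<leftarrow>zip S cs. f p a) = (\<Sum>j<length S. f (S ! j) (cs ! j))"
  by (simp add: sum_list_sum_nth atLeast0LessThan)

lemma lin_combination_iff_coefficients:
  "lin_combination (mset S) (q, v) \<longleftrightarrow>
     (\<exists>c. (\<Sum>j<length S. c j *\<^sub>R fst (S ! j)) = q \<and> (\<Sum>j<length S. (c j)\<^sup>2 * snd (S ! j)) \<le> v)"
proof
  assume "lin_combination (mset S) (q, v)"
  then obtain L where L: "mset (map fst L) = mset S" "(\<Sum>(p, a)\<leftarrow>L. a *\<^sub>R fst p) = q"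
      "(\<Sum>(p, a)\<leftarrow>L. a\<^sup>2 * snd p) \<le> v"
    unfolding lin_combination_def by auto
  obtain cs where cs: "length cs = length S" "mset (zip S cs) = mset L"
    using ex_mset_zip_left[of "map fst L" "map snd L" S] L(1) by (auto simp: zip_map_fst_snd)
  have "(\<Sum>j<length S. cs ! j *\<^sub>R fst (S ! j)) = (\<Sum>(p, a)\<leftarrow>zip S cs. a *\<^sub>R fst p)"
    by (rule sum_list_zip_nth[OF cs(1), symmetric])
  also have "\<dots> = q"
    unfolding sum_list_map_mset_eq[OF cs(2)] by (rule L(2))
  moreover have "(\<Sum>j<length S. (cs ! j)\<^sup>2 * snd (S ! j)) = (\<Sum>(p, a)\<leftarrow>zip S cs. a\<^sup>2 * snd p)"
    by (rule sum_list_zip_nth[OF cs(1), symmetric])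
  moreover have "\<dots> \<le> v"
    unfolding sum_list_map_mset_eq[OF cs(2)] by (rule L(3))
  ultimately show "\<exists>c. (\<Sum>j<length S. c j *\<^sub>R fst (S ! j)) = q \<and> (\<Sum>j<length S. (c j)\<^sup>2 * snd (S ! j)) \<le> v"
    by (intro exI[of _ "\<lambda>j. cs ! j"]) simp
next
  assume "\<exists>c. (\<Sum>j<length S. c j *\<^sub>R fst (S ! j)) = q \<and> (\<Sum>j<length S. (c j)\<^sup>2 * snd (S ! j)) \<le> v"
  then obtain c where "(\<Sum>j<length S. c j *\<^sub>R fst (S ! j)) = q" "(\<Sum>j<length S. (c j)\<^sup>2 * snd (S ! j)) \<le> v"
    by blast
  moreover define L where "L = map (\<lambda>j. (S ! j, c j)) [0..<length S]"
  moreover have "map fst L = S"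
    by (simp add: L_def comp_def map_nth)
  ultimately show "lin_combination (mset S) (q, v)"
    unfolding lin_combination_def by (intro exI[of _ L]) (simp add: L_def sum_list_map_upt)
qed

lemma sum_list_concat_map: "(\<Sum>x\<leftarrow>concat (map g xs). f x) = (\<Sum>y\<leftarrow>xs. \<Sum>x\<leftarrow>g y. f x)"
  by (induction xs) auto

lemma sum_list_rescale_coefficients:
  fixes L :: "((('a::real_vector) \<times> real) \<times> real) list"
  shows "(\<Sum>(p, a)\<leftarrow>map (\<lambda>(p, a). (p, d * a)) L. a *\<^sub>R fst p) = d *\<^sub>R (\<Sum>(p, a)\<leftarrow>L. a *\<^sub>R fst p)"
    and "(\<Sum>(p, a)\<leftarrow>map (\<lambda>(p, a). (p, d * a)) L. a\<^sup>2 * snd p) = d\<^sup>2 * (\<Sum>(p, a)\<leftarrow>L. a\<^sup>2 * snd p)"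
  by (induction L) (auto simp: scaleR_add_right algebra_simps power_mult_distrib)

lemma lin_combination_trans:
  assumes len: "length Ss = length Qs"
    and parts: "\<forall>i < length Ss. lin_combination (Ss ! i) (Qs ! i)"
    and whole: "lin_combination (mset Qs) Q"
  shows "lin_combination (sum_list Ss) Q"
proof -
  let ?n = "length Ss"
  obtain q v where Q: "Q = (q, v)" by fastforce
  obtain d where d: "(\<Sum>i<?n. d i *\<^sub>R fst (Qs ! i)) = q" "(\<Sum>i<?n. (d i)\<^sup>2 * snd (Qs ! i)) \<le> v"
    using whole lin_combination_iff_coefficients[of Qs q v] Q len by auto
  have "\<forall>i. \<exists>L. i < ?n \<longrightarrow> mset (map fst L) = Ss ! i \<and> (\<Sum>(p, a)\<leftarrow>L. a *\<^sub>R fst p) = fst (Qs ! i)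
      \<and> (\<Sum>(p, a)\<leftarrow>L. a\<^sup>2 * snd p) \<le> snd (Qs ! i)"
    using parts by (simp add: lin_combination_def)
  then obtain F where F: "\<And>i. i < ?n \<Longrightarrow> mset (map fst (F i)) = Ss ! i"
      "\<And>i. i < ?n \<Longrightarrow> (\<Sum>(p, a)\<leftarrow>F i. a *\<^sub>R fst p) = fst (Qs ! i)"
      "\<And>i. i < ?n \<Longrightarrow> (\<Sum>(p, a)\<leftarrow>F i. a\<^sup>2 * snd p) \<le> snd (Qs ! i)"
    by metis
  define L where "L = concat (map (\<lambda>i. map (\<lambda>(p, a). (p, d i * a)) (F i)) [0..<?n])"
  have "mset (map fst L) = (\<Sum>i\<leftarrow>[0..<?n]. mset (map fst (F i)))"
    by (simp add: L_def map_concat mset_concat o_def case_prod_beta)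
  also have "\<dots> = (\<Sum>i\<leftarrow>[0..<?n]. Ss ! i)"
    using F(1) by (intro arg_cong[of _ _ sum_list] map_cong) auto
  also have "\<dots> = sum_list Ss"
    by (simp add: map_nth)
  finally have "mset (map fst L) = sum_list Ss" .
  moreover have "(\<Sum>(p, a)\<leftarrow>L. a *\<^sub>R fst p) = q"
  proof -
    have "(\<Sum>(p, a)\<leftarrow>L. a *\<^sub>R fst p) = (\<Sum>i\<leftarrow>[0..<?n]. d i *\<^sub>R fst (Qs ! i))"
      unfolding L_def sum_list_concat_map sum_list_rescale_coefficients
      using F(2) by (intro arg_cong[of _ _ sum_list] map_cong) auto
    then show ?thesis using d(1) by (simp add: sum_list_map_upt)
  qed
  moreover have "(\<Sum>(p, a)\<leftarrow>L. a\<^sup>2 * snd p) \<le> v"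
  proof -
    have "(\<Sum>(p, a)\<leftarrow>L. a\<^sup>2 * snd p) = (\<Sum>i<?n. (d i)\<^sup>2 * (\<Sum>(p, a)\<leftarrow>F i. a\<^sup>2 * snd p))"
      unfolding L_def sum_list_concat_map sum_list_rescale_coefficients sum_list_map_upt ..
    also have "\<dots> \<le> (\<Sum>i<?n. (d i)\<^sup>2 * snd (Qs ! i))"
      using F(3) by (intro sum_mono mult_left_mono) auto
    finally show ?thesis using d(2) by simp
  qed
  ultimately show ?thesis unfolding lin_combination_def Q by auto
qed

lemma determ_imp_lin_combination: "determ M Q \<Longrightarrow> lin_combination M Q"
proof (induction rule: determ.induct)
  case (summation qs)
  show ?case unfolding lin_combination_def
    by (intro exI[of _ "map (\<lambda>p. (p, 1::real)) qs"]) (simp add: o_def)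
next
  case (scalar v q c)
  show ?case unfolding lin_combination_def by (intro exI[of _ "[((q, v), c)]"]) simp
next
  case (relax v v' q)
  then show ?case unfolding lin_combination_def by (intro exI[of _ "[((q, v), 1)]"]) simp
next
  case (trans Ss Qs Q)
  then show ?case by (intro lin_combination_trans) auto
qed

lemma determ_relax:
  assumes "determ M (q, v)" "0 \<le> v" "v \<le> v'"
  shows "determ M (q, v')"
  using determ.trans[of "[M]" "[(q, v)]"] assms relax[of v v' q] by simp

lemma determ_of_coefficients:
  assumes nonneg: "\<forall>j < length S. 0 \<le> snd (S ! j)"
    and mean: "(\<Sum>j<length S. c j *\<^sub>R fst (S ! j)) = q"
    and var: "(\<Sum>j<length S. (c j)\<^sup>2 * snd (S ! j)) \<le> v"
  shows "determ (mset S) (q, v)"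
proof -
  let ?n = "length S"
  define Ss where "Ss = map (\<lambda>j. {#S ! j#}) [0..<?n]"
  define Qs where "Qs = map (\<lambda>j. (c j *\<^sub>R fst (S ! j), (c j)\<^sup>2 * snd (S ! j))) [0..<?n]"
  define V where "V = (\<Sum>j<?n. (c j)\<^sup>2 * snd (S ! j))"
  have scaled: "\<forall>i < length Ss. determ (Ss ! i) (Qs ! i)"
  proof (intro allI impI)
    fix i assume "i < length Ss"
    then have "determ {#(fst (S ! i), snd (S ! i))#} (c i *\<^sub>R fst (S ! i), (c i)\<^sup>2 * snd (S ! i))"
      using nonneg by (intro scalar) (simp add: Ss_def)
    then show "determ (Ss ! i) (Qs ! i)"
      using \<open>i < length Ss\<close> by (simp add: Ss_def Qs_def)
  qed
  have summed: "determ (mset Qs) (q, V)"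
    using summation[of Qs] nonneg mean by (simp add: Qs_def V_def o_def sum_list_map_upt)
  have "determ (sum_list Ss) (q, V)"
    using determ.trans[OF _ scaled summed] by (simp add: Ss_def Qs_def)
  moreover have "sum_list Ss = mset S"
    unfolding Ss_def sum_list_singleton_mset mset_map[symmetric] map_nth ..
  moreover have "0 \<le> V"
    using nonneg by (auto simp: V_def intro: sum_nonneg)
  ultimately show ?thesis
    using var determ_relax by (simp add: V_def)
qed

lemma determ_iff_coefficients:
  assumes "\<forall>j < length S. 0 \<le> snd (S ! j)"
  shows "determ (mset S) (q, v) \<longleftrightarrow>
    (\<exists>c. (\<Sum>j<length S. c j *\<^sub>R fst (S ! j)) = q \<and> (\<Sum>j<length S. (c j)\<^sup>2 * snd (S ! j)) \<le> v)"
  using determ_imp_lin_combination[of "mset S" "(q, v)"] lin_combination_iff_coefficients[of S q v]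
    determ_of_coefficients[OF assms]
  by blast

lemma prod_two_deltas:
  fixes a b :: "'i \<Rightarrow> 'a::comm_monoid_mult"
  assumes "finite I" "i \<in> I" "j \<in> I" "i \<noteq> j"
  shows "(\<Prod>k\<in>I. if k = i then a k else if k = j then b k else 1) = a i * b j"
proof -
  have "(\<Prod>k\<in>I. if k = i then a k else if k = j then b k else 1)
      = (\<Prod>k\<in>I. (if k = i then a k else 1) * (if k = j then b k else 1))"
    using assms(4) by (intro prod.cong) auto
  then show ?thesis
    using assms(1-3) by (simp add: prod.distrib)
qed

context product_prob_space
begin

lemma
  fixes g :: "'a \<Rightarrow> real"
  assumes "i \<in> I" and g: "integrable (M i) g"
  shows integrable_PiM_component: "integrable (PiM I M) (\<lambda>\<omega>. g (\<omega> i))"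
    and integral_PiM_component: "(\<integral>\<omega>. g (\<omega> i) \<partial>PiM I M) = integral\<^sup>L (M i) g"
proof -
  have proj: "(\<lambda>\<omega>. \<omega> i) \<in> measurable (PiM I M) (M i)"
    using \<open>i \<in> I\<close> by (rule measurable_component_singleton)
  have g_meas: "g \<in> borel_measurable (M i)"
    using g by blast
  show "integrable (PiM I M) (\<lambda>\<omega>. g (\<omega> i))"
    using g integrable_distr_eq[OF proj g_meas] PiM_component[OF \<open>i \<in> I\<close>] by simp
  show "(\<integral>\<omega>. g (\<omega> i) \<partial>PiM I M) = integral\<^sup>L (M i) g"
    using integral_distr[OF proj g_meas] PiM_component[OF \<open>i \<in> I\<close>] by simp
qed

lemma
  fixes g h :: "'a \<Rightarrow> real"
  assumes I: "finite I" "i \<in> I" "j \<in> I" "i \<noteq> j"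
    and g: "integrable (M i) g" and h: "integrable (M j) h"
  shows integrable_PiM_two_components: "integrable (PiM I M) (\<lambda>\<omega>. g (\<omega> i) * h (\<omega> j))"
    and integral_PiM_two_components:
      "(\<integral>\<omega>. g (\<omega> i) * h (\<omega> j) \<partial>PiM I M) = integral\<^sup>L (M i) g * integral\<^sup>L (M j) h"
proof -
  define f where "f k = (if k = i then g else if k = j then h else (\<lambda>_. 1))" for k
  have f_int: "integrable (M k) (f k)" for k
    using g h by (simp add: f_def)
  have "(\<Prod>k\<in>I. f k (\<omega> k)) = (\<Prod>k\<in>I. if k = i then g (\<omega> k) else if k = j then h (\<omega> k) else 1)" for \<omega>
    by (intro prod.cong) (simp_all add: f_def)
  then have integrand: "(\<Prod>k\<in>I. f k (\<omega> k)) = g (\<omega> i) * h (\<omega> j)" for \<omega>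
    using prod_two_deltas[OF I] by simp
  have "(\<Prod>k\<in>I. integral\<^sup>L (M k) (f k))
      = (\<Prod>k\<in>I. if k = i then integral\<^sup>L (M i) g else if k = j then integral\<^sup>L (M j) h else 1)"
    by (intro prod.cong) (simp_all add: f_def M.prob_space)
  then have integral: "(\<Prod>k\<in>I. integral\<^sup>L (M k) (f k)) = integral\<^sup>L (M i) g * integral\<^sup>L (M j) h"
    using prod_two_deltas[OF I] by simp
  show "integrable (PiM I M) (\<lambda>\<omega>. g (\<omega> i) * h (\<omega> j))"
    using product_integrable_prod[OF I(1) f_int] by (simp add: integrand)
  show "(\<integral>\<omega>. g (\<omega> i) * h (\<omega> j) \<partial>PiM I M) = integral\<^sup>L (M i) g * integral\<^sup>L (M j) h"
    using product_integral_prod[OF I(1) f_int] by (simp add: integrand integral)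
qed

end

lemma integrable_shifted_product:
  fixes N :: "real measure"
  assumes "finite_measure N" "integrable N (\<lambda>t. t)" "integrable N (\<lambda>t. t\<^sup>2)"
  shows "integrable N (\<lambda>t. (t - a) * (t - b))"
proof -
  have "(\<lambda>t. (t - a) * (t - b)) = (\<lambda>t. t\<^sup>2 - (a + b) * t + a * b)"
    by (auto simp: algebra_simps power2_eq_square)
  then show ?thesis
    using assms by (simp add: finite_measure.integrable_const)
qed

lemma integrable_PiM_shifted_product:
  fixes M :: "'i \<Rightarrow> real measure"
  assumes "product_prob_space M"
    and I: "finite I" "i \<in> I" "j \<in> I"
    and moments: "\<And>k. k \<in> I \<Longrightarrow> integrable (M k) (\<lambda>t. t) \<and> integrable (M k) (\<lambda>t. t\<^sup>2)"
  shows "integrable (PiM I M) (\<lambda>\<omega>. (\<omega> i - a) * (\<omega> j - b))"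
proof -
  interpret product_prob_space M I by fact
  show ?thesis
  proof (cases "i = j")
    case True
    have "integrable (M i) (\<lambda>t. (t - a) * (t - b))"
      using moments[OF I(2)] by (intro integrable_shifted_product[OF M.finite_measure_axioms]) simp_all
    then show ?thesis
      using integrable_PiM_component[OF I(2)] True by simp
  next
    case False
    show ?thesis
      using moments I False by (intro integrable_PiM_two_components) auto
  qed
qed

lemma covariance_PiM_components:
  fixes M :: "'i \<Rightarrow> real measure"
  assumes "product_prob_space M"
    and I: "finite I" "i \<in> I" "j \<in> I"
    and moments: "\<And>k. k \<in> I \<Longrightarrow> integrable (M k) (\<lambda>t. t) \<and> integrable (M k) (\<lambda>t. t\<^sup>2)"
  defines "m k \<equiv> \<integral>t. t \<partial>M k"
  shows "(\<integral>\<omega>. (\<omega> i - m i) * (\<omega> j - m j) \<partial>PiM I M)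
      = (if i = j then \<integral>t. (t - m i)\<^sup>2 \<partial>M i else 0)"
proof -
  interpret product_prob_space M I by fact
  show ?thesis
  proof (cases "i = j")
    case True
    have "integrable (M i) (\<lambda>t. (t - m i) * (t - m i))"
      using moments[OF I(2)] by (intro integrable_shifted_product[OF M.finite_measure_axioms]) simp_all
    then show ?thesis
      using integral_PiM_component[OF I(2)] True by (simp add: power2_eq_square)
  next
    case False
    have "(\<integral>t. t - m k \<partial>M k) = 0" if "k \<in> I" for k
      using moments[OF that] by (simp add: m_def M.prob_space)
    then show ?thesis
      using moments I False integral_PiM_two_components[OF I False, of "\<lambda>t. t - m i" "\<lambda>t. t - m j"]
      by simp
  qed
qed

lemma linear_combination_moments:
  fixes M :: "'i \<Rightarrow> real measure" and c :: "'i \<Rightarrow> real"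
  assumes "product_prob_space M" "finite I"
    and moments: "\<And>k. k \<in> I \<Longrightarrow> integrable (M k) (\<lambda>t. t) \<and> integrable (M k) (\<lambda>t. t\<^sup>2)"
  defines "m k \<equiv> \<integral>t. t \<partial>M k"
  shows "integrable (PiM I M) (\<lambda>\<omega>. \<Sum>i\<in>I. c i * \<omega> i)"
    and "integrable (PiM I M) (\<lambda>\<omega>. (\<Sum>i\<in>I. c i * \<omega> i)\<^sup>2)"
    and "(\<integral>\<omega>. (\<Sum>i\<in>I. c i * \<omega> i) \<partial>PiM I M) = (\<Sum>i\<in>I. c i * m i)"
    and "(\<integral>\<omega>. ((\<Sum>i\<in>I. c i * \<omega> i) - (\<Sum>i\<in>I. c i * m i))\<^sup>2 \<partial>PiM I M)
      = (\<Sum>i\<in>I. (c i)\<^sup>2 * (\<integral>t. (t - m i)\<^sup>2 \<partial>M i))"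
proof -
  interpret product_prob_space M I by fact
  have square: "(\<Sum>i\<in>I. c i * (\<omega> i - a i))\<^sup>2
      = (\<Sum>i\<in>I. \<Sum>j\<in>I. c i * c j * ((\<omega> i - a i) * (\<omega> j - a j)))" for \<omega> a :: "'i \<Rightarrow> real"
    by (simp add: power2_eq_square sum_product algebra_simps)
  have shifted: "integrable (PiM I M) (\<lambda>\<omega>. (\<omega> i - a) * (\<omega> j - b))" if "i \<in> I" "j \<in> I" for i j a b
    using integrable_PiM_shifted_product[OF assms(1,2) that moments] .
  show "integrable (PiM I M) (\<lambda>\<omega>. \<Sum>i\<in>I. c i * \<omega> i)"
    using moments by (auto intro!: integrable_PiM_component)
  have square_int: "integrable (PiM I M) (\<lambda>\<omega>. (\<Sum>i\<in>I. c i * (\<omega> i - a i))\<^sup>2)" for a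
    unfolding square by (intro Bochner_Integration.integrable_sum integrable_mult_right shifted)
  show "integrable (PiM I M) (\<lambda>\<omega>. (\<Sum>i\<in>I. c i * \<omega> i)\<^sup>2)"
    using square_int[of "\<lambda>_. 0"] by simp
  have "(\<integral>\<omega>. (\<Sum>i\<in>I. c i * \<omega> i) \<partial>PiM I M) = (\<Sum>i\<in>I. \<integral>\<omega>. c i * \<omega> i \<partial>PiM I M)"
    using moments by (intro Bochner_Integration.integral_sum) (auto intro: integrable_PiM_component)
  also have "\<dots> = (\<Sum>i\<in>I. c i * m i)"
    using moments integral_PiM_component[of _ "\<lambda>t. t"] by (intro sum.cong) (auto simp: m_def)
  finally show "(\<integral>\<omega>. (\<Sum>i\<in>I. c i * \<omega> i) \<partial>PiM I M) = (\<Sum>i\<in>I. c i * m i)" .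
  define V where "V i = (\<integral>t. (t - m i)\<^sup>2 \<partial>M i)" for i
  have "(\<integral>\<omega>. ((\<Sum>i\<in>I. c i * \<omega> i) - (\<Sum>i\<in>I. c i * m i))\<^sup>2 \<partial>PiM I M)
      = (\<integral>\<omega>. (\<Sum>i\<in>I. \<Sum>j\<in>I. c i * c j * ((\<omega> i - m i) * (\<omega> j - m j))) \<partial>PiM I M)"
  proof -
    have "(\<Sum>i\<in>I. c i * \<omega> i) - (\<Sum>i\<in>I. c i * m i) = (\<Sum>i\<in>I. c i * (\<omega> i - m i))" for \<omega>
      by (simp add: sum_subtractf right_diff_distrib)
    then show ?thesis
      by (simp only: square)
  qed
  also have "\<dots> = (\<Sum>i\<in>I. \<Sum>j\<in>I. c i * c j * (\<integral>\<omega>. (\<omega> i - m i) * (\<omega> j - m j) \<partial>PiM I M))"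
    using shifted by (simp add: Bochner_Integration.integral_sum Bochner_Integration.integrable_sum)
  also have "\<dots> = (\<Sum>i\<in>I. \<Sum>j\<in>I. if i = j then c i * c i * V i else 0)"
    using covariance_PiM_components[OF assms(1,2) _ _ moments]
    by (intro sum.cong refl) (simp add: m_def V_def)
  also have "\<dots> = (\<Sum>i\<in>I. (c i)\<^sup>2 * V i)"
    using \<open>finite I\<close> by (intro sum.cong refl) (simp add: power2_eq_square)
  finally show "(\<integral>\<omega>. ((\<Sum>i\<in>I. c i * \<omega> i) - (\<Sum>i\<in>I. c i * m i))\<^sup>2 \<partial>PiM I M)
      = (\<Sum>i\<in>I. (c i)\<^sup>2 * (\<integral>t. (t - m i)\<^sup>2 \<partial>M i))"
    unfolding V_def .
qed

lemma distr_linear_combination_moments: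
  fixes N :: "'i \<Rightarrow> real measure" and c :: "'i \<Rightarrow> real"
  assumes "finite J"
    and N: "\<And>i. i \<in> J \<Longrightarrow> prob_space (N i) \<and> sets (N i) = sets borel \<and>
      integrable (N i) (\<lambda>t. t) \<and> integrable (N i) (\<lambda>t. t\<^sup>2)"
  defines "D \<equiv> distr (PiM J N) borel (\<lambda>\<omega>. \<Sum>i\<in>J. c i * \<omega> i)"
  shows "prob_space D" "integrable D (\<lambda>t. t)" "integrable D (\<lambda>t. t\<^sup>2)"
    and "(\<integral>t. t \<partial>D) = (\<Sum>i\<in>J. c i * (\<integral>t. t \<partial>N i))"
    and "(\<integral>t. (t - (\<Sum>i\<in>J. c i * (\<integral>t. t \<partial>N i)))\<^sup>2 \<partial>D)
      = (\<Sum>i\<in>J. (c i)\<^sup>2 * (\<integral>t. (t - (\<integral>t. t \<partial>N i))\<^sup>2 \<partial>N i))"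
proof -
  \<comment> \<open>Outside J the factors are irrelevant; they are replaced by a point mass to get a product of probability spaces.\<close>
  define M where "M i = (if i \<in> J then N i else return borel 0)" for i
  have prob_M: "prob_space (M i)" for i
    using N by (auto simp: M_def prob_space_return)
  then have product: "product_prob_space M"
    by (rule product_prob_spaceI)
  have sets_M: "sets (M i) = sets borel" for i
    using N by (auto simp: M_def)
  have moments: "\<And>i. i \<in> J \<Longrightarrow> integrable (M i) (\<lambda>t. t) \<and> integrable (M i) (\<lambda>t. t\<^sup>2)"
    using N by (auto simp: M_def)
  have D: "D = distr (PiM J M) borel (\<lambda>\<omega>. \<Sum>i\<in>J. c i * \<omega> i)"
    unfolding D_def by (intro arg_cong[of _ _ "\<lambda>P. distr P borel _"] PiM_cong) (auto simp: M_def)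
  have component: "(\<lambda>\<omega>. \<omega> i) \<in> borel_measurable (PiM J M)" if "i \<in> J" for i
    using measurable_component_singleton[OF that, of M] measurable_cong_sets[OF refl sets_M] by blast
  have comb: "(\<lambda>\<omega>. \<Sum>i\<in>J. c i * \<omega> i) \<in> borel_measurable (PiM J M)"
    using component by (intro borel_measurable_sum borel_measurable_times) auto
  have N_M: "integral\<^sup>L (N i) f = integral\<^sup>L (M i) f" if "i \<in> J" for i and f :: "real \<Rightarrow> real"
    using that by (simp add: M_def)
  note lin = linear_combination_moments[OF product \<open>finite J\<close> moments, of c]
  show "prob_space D"
    unfolding D using prob_space_PiM[OF prob_M] comb by (rule prob_space.prob_space_distr)
  show "integrable D (\<lambda>t. t)" "integrable D (\<lambda>t. t\<^sup>2)"
    unfolding D using lin(1,2) by (simp_all add: integrable_distr_eq[OF comb])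
  show "(\<integral>t. t \<partial>D) = (\<Sum>i\<in>J. c i * (\<integral>t. t \<partial>N i))"
    unfolding D using lin(3) N_M by (simp add: integral_distr[OF comb])
  show "(\<integral>t. (t - (\<Sum>i\<in>J. c i * (\<integral>t. t \<partial>N i)))\<^sup>2 \<partial>D)
      = (\<Sum>i\<in>J. (c i)\<^sup>2 * (\<integral>t. (t - (\<integral>t. t \<partial>N i))\<^sup>2 \<partial>N i))"
    unfolding D using lin(4) N_M by (simp add: integral_distr[OF comb] cong: sum.cong)
qed

lemma answers_linear_combination:
  fixes K :: "'i \<Rightarrow> real ^ ('n::finite) \<Rightarrow> real measure"
  assumes "finite J" and answers: "\<And>i. i \<in> J \<Longrightarrow> answers (K i) (Q i)"
  shows "answers (\<lambda>x. distr (PiM J (\<lambda>i. K i x)) borel (\<lambda>\<omega>. \<Sum>i\<in>J. c i * \<omega> i))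
    (\<Sum>i\<in>J. c i *\<^sub>R fst (Q i), \<Sum>i\<in>J. (c i)\<^sup>2 * snd (Q i))"
  unfolding answers_def fst_conv snd_conv
proof (intro allI conjI)
  fix x
  have K: "\<And>i. i \<in> J \<Longrightarrow> prob_space (K i x) \<and> sets (K i x) = sets borel \<and>
      integrable (K i x) (\<lambda>t. t) \<and> integrable (K i x) (\<lambda>t. t\<^sup>2)"
    using answers by (simp add: answers_def)
  have mean: "(\<Sum>i\<in>J. c i * (\<integral>t. t \<partial>K i x)) = (\<Sum>i\<in>J. c i *\<^sub>R fst (Q i)) \<bullet> x"
    using answers by (simp add: answers_def inner_sum_left)
  note D = distr_linear_combination_moments[where N = "\<lambda>i. K i x" and c = c, OF \<open>finite J\<close> K]
  show "prob_space (distr (PiM J (\<lambda>i. K i x)) borel (\<lambda>\<omega>. \<Sum>i\<in>J. c i * \<omega> i))"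
    "integrable (distr (PiM J (\<lambda>i. K i x)) borel (\<lambda>\<omega>. \<Sum>i\<in>J. c i * \<omega> i)) (\<lambda>t. t)"
    "integrable (distr (PiM J (\<lambda>i. K i x)) borel (\<lambda>\<omega>. \<Sum>i\<in>J. c i * \<omega> i)) (\<lambda>t. t\<^sup>2)"
    using D(1-3) by simp_all
  show "sets (distr (PiM J (\<lambda>i. K i x)) borel (\<lambda>\<omega>. \<Sum>i\<in>J. c i * \<omega> i)) = sets borel"
    by simp
  show "(\<integral>t. t \<partial>distr (PiM J (\<lambda>i. K i x)) borel (\<lambda>\<omega>. \<Sum>i\<in>J. c i * \<omega> i))
      = (\<Sum>i\<in>J. c i *\<^sub>R fst (Q i)) \<bullet> x"
    using D(4) mean by simp
  have "(\<integral>t. (t - (\<Sum>i\<in>J. c i *\<^sub>R fst (Q i)) \<bullet> x)\<^sup>2 \<partial>distr (PiM J (\<lambda>i. K i x)) borel (\<lambda>\<omega>. \<Sum>i\<in>J. c i * \<omega> i))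
      = (\<Sum>i\<in>J. (c i)\<^sup>2 * (\<integral>t. (t - (\<integral>t. t \<partial>K i x))\<^sup>2 \<partial>K i x))"
    using D(5) mean by simp
  also have "\<dots> \<le> (\<Sum>i\<in>J. (c i)\<^sup>2 * snd (Q i))"
    using answers by (intro sum_mono mult_left_mono) (auto simp: answers_def)
  finally show "(\<integral>t. (t - (\<Sum>i\<in>J. c i *\<^sub>R fst (Q i)) \<bullet> x)\<^sup>2
      \<partial>distr (PiM J (\<lambda>i. K i x)) borel (\<lambda>\<omega>. \<Sum>i\<in>J. c i * \<omega> i)) \<le> (\<Sum>i\<in>J. (c i)\<^sup>2 * snd (Q i))" .
qed

lemma answers_relax: "answers K (q, v) \<Longrightarrow> v \<le> v' \<Longrightarrow> answers K (q, v')"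
  by (auto simp: answers_def intro: order_trans)

definition two_point :: "real \<Rightarrow> real \<Rightarrow> real measure" where
  "two_point m s = distr (measure_pmf (bernoulli_pmf (1/2))) borel (\<lambda>b. if b then m + s else m - s)"

lemma
  shows prob_space_two_point: "prob_space (two_point m s)"
    and sets_two_point: "sets (two_point m s) = sets borel"
    and integrable_two_point: "f \<in> borel_measurable borel \<Longrightarrow> integrable (two_point m s) (f :: real \<Rightarrow> real)"
    and mean_two_point: "(\<integral>t. t \<partial>two_point m s) = m"
    and variance_two_point: "(\<integral>t. (t - m)\<^sup>2 \<partial>two_point m s) = s\<^sup>2"
proof -
  have outcome: "(\<lambda>b. if b then m + s else m - s) \<in> measurable (measure_pmf (bernoulli_pmf (1/2))) borel"
    by simp
  show "prob_space (two_point m s)"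
    unfolding two_point_def by (rule prob_space.prob_space_distr[OF prob_space_measure_pmf outcome])
  show "sets (two_point m s) = sets borel"
    by (simp add: two_point_def)
  show "integrable (two_point m s) f" if "f \<in> borel_measurable borel"
    unfolding two_point_def integrable_distr_eq[OF outcome that]
    by (rule integrable_measure_pmf_finite) simp
  show "(\<integral>t. t \<partial>two_point m s) = m" "(\<integral>t. (t - m)\<^sup>2 \<partial>two_point m s) = s\<^sup>2"
    unfolding two_point_def by (simp_all add: integral_distr[OF outcome] field_simps)
qed

lemma answers_two_point: "0 \<le> v \<Longrightarrow> answers (\<lambda>x. two_point (q \<bullet> x) (sqrt v)) (q, v)"
  by (simp add: answers_def prob_space_two_point sets_two_point integrable_two_point
      mean_two_point variance_two_point)

lemma coefficients_of_lin_answerable: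
  fixes S :: "('n::finite) query list"
  assumes nonneg: "\<forall>j < length S. 0 \<le> snd (S ! j)"
    and answerable: "lin_answerable S (q, v)"
  shows "\<exists>c. (\<Sum>j<length S. c j *\<^sub>R fst (S ! j)) = q \<and> (\<Sum>j<length S. (c j)\<^sup>2 * snd (S ! j)) \<le> v"
proof -
  obtain c where c: "\<And>K. \<forall>i < length S. answers (K i) (S ! i) \<Longrightarrow>
      answers (\<lambda>x. distr (PiM {..<length S} (\<lambda>i. K i x)) borel (\<lambda>\<omega>. \<Sum>i<length S. c i * \<omega> i)) (q, v)"
    using answerable unfolding lin_answerable_def by blast
  \<comment> \<open>Test the combination on mechanisms whose variances are exactly the bounds of S.\<close>
  define K where "K i x = two_point (fst (S ! i) \<bullet> x) (sqrt (snd (S ! i)))" for i x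
  define D where "D x = distr (PiM {..<length S} (\<lambda>i. K i x)) borel (\<lambda>\<omega>. \<Sum>i<length S. c i * \<omega> i)" for x
  have K_answers: "answers (K i) (S ! i)" if "i < length S" for i
    using answers_two_point[of "snd (S ! i)" "fst (S ! i)"] nonneg that by (simp add: K_def[abs_def])
  then have D_answers: "answers D (q, v)"
    unfolding D_def by (intro c) blast
  have K_moments: "\<And>i. i \<in> {..<length S} \<Longrightarrow> prob_space (K i x) \<and> sets (K i x) = sets borel \<and>
      integrable (K i x) (\<lambda>t. t) \<and> integrable (K i x) (\<lambda>t. t\<^sup>2)" for x
    using K_answers by (simp add: answers_def)
  have D_mean: "(\<integral>t. t \<partial>D x) = (\<Sum>i<length S. c i * (\<integral>t. t \<partial>K i x))" for x
    using distr_linear_combination_moments(4)[where N = "\<lambda>i. K i x" and c = c and J = "{..<length S}",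
        OF finite_lessThan K_moments]
    unfolding D_def .
  have D_variance: "(\<integral>t. (t - (\<Sum>i<length S. c i * (\<integral>t. t \<partial>K i x)))\<^sup>2 \<partial>D x)
      = (\<Sum>i<length S. (c i)\<^sup>2 * (\<integral>t. (t - (\<integral>t. t \<partial>K i x))\<^sup>2 \<partial>K i x))" for x
    using distr_linear_combination_moments(5)[where N = "\<lambda>i. K i x" and c = c and J = "{..<length S}",
        OF finite_lessThan K_moments]
    unfolding D_def .
  have K_mean: "(\<integral>t. t \<partial>K i x) = fst (S ! i) \<bullet> x" for i x
    by (simp add: K_def mean_two_point)
  have K_variance: "(\<integral>t. t\<^sup>2 \<partial>K i 0) = snd (S ! i)" if "i < length S" for i
    using variance_two_point[of 0 "sqrt (snd (S ! i))"] nonneg that by (simp add: K_def)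
  have "(\<Sum>j<length S. c j *\<^sub>R fst (S ! j)) \<bullet> x = q \<bullet> x" for x
  proof -
    have "(\<integral>t. t \<partial>D x) = q \<bullet> x"
      using D_answers by (simp add: answers_def)
    then show ?thesis
      using D_mean[of x] by (simp add: K_mean inner_sum_left)
  qed
  then have "(\<Sum>j<length S. c j *\<^sub>R fst (S ! j)) = q"
    using vector_eq_rdot by blast
  moreover have "(\<Sum>j<length S. (c j)\<^sup>2 * snd (S ! j)) \<le> v"
  proof -
    have "(\<Sum>j<length S. (c j)\<^sup>2 * snd (S ! j))
        = (\<Sum>i<length S. (c i)\<^sup>2 * (\<integral>t. (t - (\<integral>t. t \<partial>K i 0))\<^sup>2 \<partial>K i 0))"
      by (intro sum.cong refl) (simp add: K_mean K_variance)
    also have "\<dots> = (\<integral>t. (t - (\<Sum>i<length S. c i * (\<integral>t. t \<partial>K i 0)))\<^sup>2 \<partial>D 0)"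
      by (rule D_variance[of 0, symmetric])
    also have "\<dots> = (\<integral>t. (t - q \<bullet> 0)\<^sup>2 \<partial>D 0)"
      by (simp add: K_mean)
    also have "\<dots> \<le> v"
      using D_answers unfolding answers_def fst_conv snd_conv by blast
    finally show ?thesis .
  qed
  ultimately show ?thesis
    by blast
qed

lemma lin_answerable_of_coefficients:
  fixes S :: "('n::finite) query list"
  assumes mean: "(\<Sum>j<length S. c j *\<^sub>R fst (S ! j)) = q"
    and var: "(\<Sum>j<length S. (c j)\<^sup>2 * snd (S ! j)) \<le> v"
  shows "lin_answerable S (q, v)"
  unfolding lin_answerable_def
proof (intro exI[of _ c] allI impI)
  fix K :: "nat \<Rightarrow> real ^ 'n \<Rightarrow> real measure"
  assume "\<forall>i < length S. answers (K i) (S ! i)"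
  then have "answers (\<lambda>x. distr (PiM {..<length S} (\<lambda>i. K i x)) borel (\<lambda>\<omega>. \<Sum>i<length S. c i * \<omega> i))
      (q, \<Sum>j<length S. (c j)\<^sup>2 * snd (S ! j))"
    using answers_linear_combination[of "{..<length S}" K "\<lambda>i. S ! i" c] mean by simp
  then show "answers (\<lambda>x. distr (PiM {..<length S} (\<lambda>i. K i x)) borel (\<lambda>\<omega>. \<Sum>i<length S. c i * \<omega> i)) (q, v)"
    using var by (rule answers_relax)
qed

theorem proposition1:
  fixes S :: "((real ^ ('n::finite)) \<times> real) list" and q :: "real ^ 'n" and v :: real
  assumes "\<forall>j < length S. snd (S ! j) \<ge> 0" and "v \<ge> 0"
  shows "(lin_answerable S (q, v) \<longleftrightarrow> determ (mset S) (q, v))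
       \<and> (determ (mset S) (q, v) \<longleftrightarrow>
          (\<exists>c :: nat \<Rightarrow> real. (\<Sum>j<length S. c j *\<^sub>R fst (S ! j)) = q
                \<and> (\<Sum>j<length S. (c j) ^ 2 * snd (S ! j)) \<le> v))"
proof -
  let ?coefficients = "\<exists>c. (\<Sum>j<length S. c j *\<^sub>R fst (S ! j)) = q \<and> (\<Sum>j<length S. (c j)\<^sup>2 * snd (S ! j)) \<le> v"
  have "determ (mset S) (q, v) \<longleftrightarrow> ?coefficients"
    by (rule determ_iff_coefficients[OF assms(1)])
  moreover have "lin_answerable S (q, v) \<longleftrightarrow> ?coefficients"
    using coefficients_of_lin_answerable[OF assms(1)] lin_answerable_of_coefficients by blast
  ultimately show ?thesis
    by simp
qed

end
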